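(* Let $R$ be an arithmetic ring, $M$ a finitely generated $R$-module, and $\{0\}=M_0\subset M_1\subset\dots\subset M_n=M$ a pure-composition series of $M$ with $M_i/M_{i-1}=R(x_i+M_{i-1})$ for $1\le i\le n$, whose annihilator sequence $(A_i)_{1\le i\le n}$, $A_i=\mathrm{ann}(M_i/M_{i-1})$, is increasing ($A_1\subseteq\dots\subseteq A_n$). If $c_1,\dots,c_n\in R$ satisfy $\sum_{i=1}^n c_ix_i=0$, then $c_i\in A_n$ for every $i$.
   Context: All rings are commutative with identity. $R$ is arithmetic if $R_P$ is a valuation ring for every maximal ideal $P$. A submodule is pure if its inclusion stays injective after tensoring with any module; a pure-composition series is a finite chain of pure submodules from $0$ to $M$. *)

theory Defs
  imports "HOL-Algebra.Module" "HOL-Algebra.Ideal" "HOL-Algebra.FiniteProduct"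
begin

text \<open>Divisibility of fractions in the localization R_P (elements a/s with s not in P):
  a/s divides b/t in R_P iff b/t = (r/u)(a/s) for some r in R and u not in P, i.e.
  v (b u s - r a t) = 0 for some v not in P.\<close>
definition loc_dvd :: "('a, 'b) ring_scheme \<Rightarrow> 'a set \<Rightarrow> 'a \<times> 'a \<Rightarrow> 'a \<times> 'a \<Rightarrow> bool" where
  "loc_dvd R P x y \<longleftrightarrow>
     (\<exists>r\<in>carrier R. \<exists>u\<in>carrier R - P. \<exists>v\<in>carrier R - P.
        v \<otimes>\<^bsub>R\<^esub> (fst y \<otimes>\<^bsub>R\<^esub> (u \<otimes>\<^bsub>R\<^esub> snd x))
      = v \<otimes>\<^bsub>R\<^esub> (r \<otimes>\<^bsub>R\<^esub> (fst x \<otimes>\<^bsub>R\<^esub> snd y)))"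

text \<open>R_P is a valuation ring (in the sense of commutative, not necessarily domain, rings:
  any two elements are comparable under divisibility, i.e. the ideals form a chain).\<close>
definition localization_is_valuation :: "('a, 'b) ring_scheme \<Rightarrow> 'a set \<Rightarrow> bool" where
  "localization_is_valuation R P \<longleftrightarrow>
     (\<forall>a\<in>carrier R. \<forall>s\<in>carrier R - P. \<forall>b\<in>carrier R. \<forall>t\<in>carrier R - P.
        loc_dvd R P (a, s) (b, t) \<or> loc_dvd R P (b, t) (a, s))"

definition arithmetic_ring :: "('a, 'b) ring_scheme \<Rightarrow> bool" where
  "arithmetic_ring R \<longleftrightarrow> cring R \<and>
     (\<forall>P. maximalideal P R \<longrightarrow> localization_is_valuation R P)"

definition fin_gen_module :: "('a, 'c) ring_scheme \<Rightarrow> ('a, 'b, 'd) module_scheme \<Rightarrow> bool" where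
  "fin_gen_module R M \<longleftrightarrow>
     (\<exists>S. finite S \<and> S \<subseteq> carrier M \<and>
        (\<forall>m\<in>carrier M. \<exists>a. a \<in> S \<rightarrow> carrier R \<and>
            m = finsum M (\<lambda>s. a s \<odot>\<^bsub>M\<^esub> s) S))"

text \<open>A formal sum is a finitely supported function  M x E -> R.  The tensor product
  M (x)_R E is the module of formal sums supported in carrier M x carrier E modulo the
  submodule tensor_rel R M E spanned by the bilinearity relations.\<close>

definition fdelta :: "('a, 'c) ring_scheme \<Rightarrow> 'm \<times> 'e \<Rightarrow> ('m \<times> 'e \<Rightarrow> 'a)" where
  "fdelta R p = (\<lambda>q. if q = p then \<one>\<^bsub>R\<^esub> else \<zero>\<^bsub>R\<^esub>)"

definition fsum_in :: "('a, 'c) ring_scheme \<Rightarrow> 'm set \<Rightarrow> 'e set \<Rightarrow> ('m \<times> 'e \<Rightarrow> 'a) \<Rightarrow> bool" where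
  "fsum_in R A B f \<longleftrightarrow> (\<forall>p. f p \<in> carrier R) \<and> finite {p. f p \<noteq> \<zero>\<^bsub>R\<^esub>}
      \<and> {p. f p \<noteq> \<zero>\<^bsub>R\<^esub>} \<subseteq> A \<times> B"

definition tensor_gens :: "('a, 'c) ring_scheme \<Rightarrow> ('a, 'm, 'd) module_scheme \<Rightarrow>
    ('a, 'e, 'g) module_scheme \<Rightarrow> ('m \<times> 'e \<Rightarrow> 'a) set" where
  "tensor_gens R M E =
     {(\<lambda>q. fdelta R (m \<oplus>\<^bsub>M\<^esub> m', e) q \<ominus>\<^bsub>R\<^esub> fdelta R (m, e) q \<ominus>\<^bsub>R\<^esub> fdelta R (m', e) q)
        | m m' e. m \<in> carrier M \<and> m' \<in> carrier M \<and> e \<in> carrier E}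
   \<union> {(\<lambda>q. fdelta R (m, e \<oplus>\<^bsub>E\<^esub> e') q \<ominus>\<^bsub>R\<^esub> fdelta R (m, e) q \<ominus>\<^bsub>R\<^esub> fdelta R (m, e') q)
        | m e e'. m \<in> carrier M \<and> e \<in> carrier E \<and> e' \<in> carrier E}
   \<union> {(\<lambda>q. fdelta R (r \<odot>\<^bsub>M\<^esub> m, e) q \<ominus>\<^bsub>R\<^esub> r \<otimes>\<^bsub>R\<^esub> fdelta R (m, e) q)
        | r m e. r \<in> carrier R \<and> m \<in> carrier M \<and> e \<in> carrier E}
   \<union> {(\<lambda>q. fdelta R (m, r \<odot>\<^bsub>E\<^esub> e) q \<ominus>\<^bsub>R\<^esub> r \<otimes>\<^bsub>R\<^esub> fdelta R (m, e) q)
        | r m e. r \<in> carrier R \<and> m \<in> carrier M \<and> e \<in> carrier E}"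

inductive_set tensor_rel :: "('a, 'c) ring_scheme \<Rightarrow> ('a, 'm, 'd) module_scheme \<Rightarrow>
    ('a, 'e, 'g) module_scheme \<Rightarrow> ('m \<times> 'e \<Rightarrow> 'a) set"
  for R M E where
  zero: "(\<lambda>q. \<zero>\<^bsub>R\<^esub>) \<in> tensor_rel R M E"
| step: "f \<in> tensor_rel R M E \<Longrightarrow> g \<in> tensor_gens R M E \<Longrightarrow> r \<in> carrier R \<Longrightarrow>
         (\<lambda>q. f q \<oplus>\<^bsub>R\<^esub> r \<otimes>\<^bsub>R\<^esub> g q) \<in> tensor_rel R M E"

text \<open>The canonical map N (x) E -> M (x) E is induced by the identity on formal sums;
  it is injective iff every formal sum on N x E that is a relation in M (x) E is already
  a relation in N (x) E.  Test modules E range over all R-modules whose elements have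
  type ((nat => 'a) set) (this covers, up to isomorphism, every finitely presented and
  indeed every countably generated R-module).\<close>
definition tensor_injective :: "('a, 'c) ring_scheme \<Rightarrow> ('a, 'm, 'd) module_scheme \<Rightarrow>
    'm set \<Rightarrow> bool" where
  "tensor_injective R M N \<longleftrightarrow>
     (\<forall>E :: ('a, (nat \<Rightarrow> 'a) set) module. module R E \<longrightarrow>
        (\<forall>f. fsum_in R N (carrier E) f \<and> f \<in> tensor_rel R M E \<longrightarrow>
             f \<in> tensor_rel R (M\<lparr>carrier := N\<rparr>) E))"

definition pure_submodule :: "('a, 'c) ring_scheme \<Rightarrow> ('a, 'm, 'd) module_scheme \<Rightarrow> 'm set \<Rightarrow> bool" where
  "pure_submodule R M N \<longleftrightarrow> submodule N R M \<and>
     tensor_injective R M N"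

definition ann_quot :: "('a, 'c) ring_scheme \<Rightarrow> ('a, 'm, 'd) module_scheme \<Rightarrow> 'm set \<Rightarrow> 'm set \<Rightarrow> 'a set" where
  "ann_quot R M A B = {r \<in> carrier R. \<forall>m\<in>B. r \<odot>\<^bsub>M\<^esub> m \<in> A}"

end

theory Submission
  imports Defs
begin

text \<open>
  A pure submodule N of M is relatively divisible: N \<inter> cM = cN for every c.  Indeed, test
  purity with E = R/cR: if cx \<in> N, then cx \<otimes> 1 = x \<otimes> c1 = 0 in M \<otimes> E, so cx \<otimes> 1
  already vanishes in N \<otimes> E, and the map N \<otimes> E \<rightarrow> N/cN, m \<otimes> (a + cR) \<mapsto> am + cN,
  sends it to cx + cN, which therefore vanishes.

  From c_1 x_1 + ... + c_n x_n = 0 we get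
  c_n x_n \<in> M_(n-1), hence c_n \<in> A_n, and relative divisibility of M_(n-1) gives
  y = d_1 x_1 + ... + d_(n-1) x_(n-1) with c_n y = c_n x_n.  Then the coefficients
  c_i + c_n d_i (i < n) form a relation, so by induction they lie in A_(n-1) \<subseteq> A_n, and
  c_i \<in> A_n because A_n is an ideal.
\<close>

lemma (in abelian_monoid) finsum_atLeast1_Suc:
  "f \<in> {1..Suc k} \<rightarrow> carrier G \<Longrightarrow> finsum G f {1..Suc k} = f (Suc k) \<oplus> finsum G f {1..k}"
  using finsum_insert[of "{1..k}" "Suc k" f] by (simp add: atLeastAtMostSuc_conv)

context module
begin

lemma submodule_zero_closed: "submodule N R M \<Longrightarrow> \<zero>\<^bsub>M\<^esub> \<in> N"
  using subgroup.one_closed[OF submodule.axioms(1)] by fastforce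

lemma finsum_smult_add_smult:
  assumes "finite I" "x \<in> I \<rightarrow> carrier M" "a \<in> I \<rightarrow> carrier R" "b \<in> I \<rightarrow> carrier R" "r \<in> carrier R"
  shows "finsum M (\<lambda>i. (a i \<oplus> r \<otimes> b i) \<odot>\<^bsub>M\<^esub> x i) I
    = finsum M (\<lambda>i. a i \<odot>\<^bsub>M\<^esub> x i) I \<oplus>\<^bsub>M\<^esub> r \<odot>\<^bsub>M\<^esub> finsum M (\<lambda>i. b i \<odot>\<^bsub>M\<^esub> x i) I"
proof -
  have "finsum M (\<lambda>i. (a i \<oplus> r \<otimes> b i) \<odot>\<^bsub>M\<^esub> x i) I
      = finsum M (\<lambda>i. a i \<odot>\<^bsub>M\<^esub> x i \<oplus>\<^bsub>M\<^esub> r \<odot>\<^bsub>M\<^esub> (b i \<odot>\<^bsub>M\<^esub> x i)) I"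
    using assms by (intro M.finsum_cong') (auto simp: smult_l_distr smult_assoc1 Pi_iff)
  also have "\<dots> = finsum M (\<lambda>i. a i \<odot>\<^bsub>M\<^esub> x i) I \<oplus>\<^bsub>M\<^esub> r \<odot>\<^bsub>M\<^esub> finsum M (\<lambda>i. b i \<odot>\<^bsub>M\<^esub> x i) I"
    using assms by (simp add: M.finsum_addf finsum_smult_ldistr Pi_iff)
  finally show ?thesis .
qed

lemma ann_quot_ideal:
  assumes A: "submodule A R M" and B: "B \<subseteq> carrier M"
  shows "ideal (ann_quot R M A B) R"
proof (rule idealI[OF R.ring_axioms])
  show "subgroup (ann_quot R M A B) (add_monoid R)"
  proof (rule R.add.subgroupI)
    show "ann_quot R M A B \<subseteq> carrier R"
      by (auto simp: ann_quot_def)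
    have "\<zero> \<in> ann_quot R M A B"
      using B submodule_zero_closed[OF A] by (auto simp: ann_quot_def)
    then show "ann_quot R M A B \<noteq> {}"
      by blast
  next
    fix a b assume "a \<in> ann_quot R M A B" "b \<in> ann_quot R M A B"
    then show "\<ominus> a \<in> ann_quot R M A B" "a \<oplus> b \<in> ann_quot R M A B"
      using B submoduleE(3,5)[OF A] by (auto simp: ann_quot_def smult_l_minus smult_l_distr subsetD)
  qed
  fix a r assume a: "a \<in> ann_quot R M A B" and r: "r \<in> carrier R"
  then show ra: "r \<otimes> a \<in> ann_quot R M A B"
    using B submoduleE(4)[OF A] by (auto simp: ann_quot_def smult_assoc1 subsetD)
  have "a \<in> carrier R"
    using a by (simp add: ann_quot_def)
  then show "a \<otimes> r \<in> ann_quot R M A B"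
    using ra r by (simp add: R.m_comm)
qed

lemma ann_quot_cyclicI:
  assumes A: "submodule A R M" and B: "B \<subseteq> carrier M" and x: "x \<in> carrier M"
    and gen: "\<And>m. m \<in> B \<Longrightarrow> \<exists>s\<in>carrier R. m \<ominus>\<^bsub>M\<^esub> s \<odot>\<^bsub>M\<^esub> x \<in> A"
    and r: "r \<in> carrier R" and rx: "r \<odot>\<^bsub>M\<^esub> x \<in> A"
  shows "r \<in> ann_quot R M A B"
  unfolding ann_quot_def
proof (intro CollectI conjI ballI r)
  fix m assume m: "m \<in> B"
  then obtain s where s: "s \<in> carrier R" "m \<ominus>\<^bsub>M\<^esub> s \<odot>\<^bsub>M\<^esub> x \<in> A"
    using gen by blast
  have "r \<odot>\<^bsub>M\<^esub> m = r \<odot>\<^bsub>M\<^esub> (m \<ominus>\<^bsub>M\<^esub> s \<odot>\<^bsub>M\<^esub> x) \<oplus>\<^bsub>M\<^esub> s \<odot>\<^bsub>M\<^esub> (r \<odot>\<^bsub>M\<^esub> x)"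
    using m B x r s(1)
    by (simp add: M.minus_eq smult_r_distr smult_r_minus smult_assoc1[symmetric] R.m_comm M.a_assoc
        M.l_neg subsetD)
  also have "\<dots> \<in> A"
    using submoduleE(4,5)[OF A] s rx r by blast
  finally show "r \<odot>\<^bsub>M\<^esub> m \<in> A" .
qed

lemma smult_image_cancel_one_plus:
  assumes N: "submodule N R M" and c: "c \<in> carrier R" and t: "t \<in> carrier R"
    and z: "z \<in> N" and y: "y \<in> N" and eq: "(\<one> \<oplus> c \<otimes> t) \<odot>\<^bsub>M\<^esub> z = c \<odot>\<^bsub>M\<^esub> y"
  shows "z \<in> (\<lambda>y. c \<odot>\<^bsub>M\<^esub> y) ` N"
proof -
  have zy: "z \<in> carrier M" "y \<in> carrier M"
    using z y submoduleE(1)[OF N] by auto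
  have "c \<odot>\<^bsub>M\<^esub> (y \<ominus>\<^bsub>M\<^esub> t \<odot>\<^bsub>M\<^esub> z) = (\<one> \<oplus> c \<otimes> t) \<odot>\<^bsub>M\<^esub> z \<ominus>\<^bsub>M\<^esub> (c \<otimes> t) \<odot>\<^bsub>M\<^esub> z"
    using eq zy c t by (simp add: M.minus_eq smult_r_distr smult_r_minus smult_assoc1)
  also have "\<dots> = z"
    using zy c t by (simp add: smult_l_distr M.minus_eq M.a_assoc M.r_neg)
  finally have "z = c \<odot>\<^bsub>M\<^esub> (y \<ominus>\<^bsub>M\<^esub> t \<odot>\<^bsub>M\<^esub> z)" ..
  moreover have "y \<ominus>\<^bsub>M\<^esub> t \<odot>\<^bsub>M\<^esub> z \<in> N"
    using y z t submoduleE(3-5)[OF N] by (simp add: M.minus_eq)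
  ultimately show ?thesis
    by blast
qed

end

section \<open>The test module R/cR\<close>

text \<open>
  Test modules in tensor_injective have carrier type (nat \<Rightarrow> 'a) set, so the coset a + cR
  is encoded as the set of sequences whose value at 0 lies in it; mult and one are dummies.
\<close>
definition pquot_class :: "('a, 'c) ring_scheme \<Rightarrow> 'a \<Rightarrow> 'a \<Rightarrow> (nat \<Rightarrow> 'a) set" where
  "pquot_class R c a = {g. \<exists>t\<in>carrier R. g 0 = a \<oplus>\<^bsub>R\<^esub> c \<otimes>\<^bsub>R\<^esub> t}"

definition pquot_rep :: "('a, 'c) ring_scheme \<Rightarrow> 'a \<Rightarrow> (nat \<Rightarrow> 'a) set \<Rightarrow> 'a" where
  "pquot_rep R c X = (SOME a. a \<in> carrier R \<and> X = pquot_class R c a)"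

definition pquot_module :: "('a, 'c) ring_scheme \<Rightarrow> 'a \<Rightarrow> ('a, (nat \<Rightarrow> 'a) set) module" where
  "pquot_module R c =
     \<lparr>carrier = pquot_class R c ` carrier R, mult = (\<lambda>_ _. {}), one = {},
      zero = pquot_class R c \<zero>\<^bsub>R\<^esub>,
      add = (\<lambda>X Y. pquot_class R c (pquot_rep R c X \<oplus>\<^bsub>R\<^esub> pquot_rep R c Y)),
      smult = (\<lambda>r X. pquot_class R c (r \<otimes>\<^bsub>R\<^esub> pquot_rep R c X))\<rparr>"

context cring
begin

lemma pquot_class_eq_iff:
  assumes "c \<in> carrier R" "a \<in> carrier R" "b \<in> carrier R"
  shows "pquot_class R c a = pquot_class R c b \<longleftrightarrow> (\<exists>t\<in>carrier R. a = b \<oplus> c \<otimes> t)"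
proof
  assume "pquot_class R c a = pquot_class R c b"
  moreover have "(\<lambda>_. a) \<in> pquot_class R c a"
    unfolding pquot_class_def using assms by (auto intro!: bexI[of _ \<zero>])
  ultimately show "\<exists>t\<in>carrier R. a = b \<oplus> c \<otimes> t"
    unfolding pquot_class_def by auto
next
  assume "\<exists>t\<in>carrier R. a = b \<oplus> c \<otimes> t"
  then obtain t where t: "t \<in> carrier R" "a = b \<oplus> c \<otimes> t" by blast
  have "a \<oplus> c \<otimes> s = b \<oplus> c \<otimes> (t \<oplus> s)" "b \<oplus> c \<otimes> s = a \<oplus> c \<otimes> (s \<ominus> t)"
    if "s \<in> carrier R" for s
    using that t assms by algebra+
  then show "pquot_class R c a = pquot_class R c b"
    unfolding pquot_class_def using t(1) by (metis (no_types, opaque_lifting) a_closed minus_closed)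
qed

lemma pquot_rep_class:
  assumes "c \<in> carrier R" "a \<in> carrier R"
  obtains t where "t \<in> carrier R" "pquot_rep R c (pquot_class R c a) = a \<oplus> c \<otimes> t"
proof -
  have "pquot_rep R c (pquot_class R c a) \<in> carrier R
      \<and> pquot_class R c a = pquot_class R c (pquot_rep R c (pquot_class R c a))"
    unfolding pquot_rep_def by (rule someI[of _ a]) (use assms in simp)
  then show thesis
    using that pquot_class_eq_iff assms by (metis (no_types, lifting))
qed

lemma pquot_rep_closed: "X \<in> carrier (pquot_module R c) \<Longrightarrow> pquot_rep R c X \<in> carrier R"
  unfolding pquot_module_def pquot_rep_def by (auto intro: someI2)

lemma pquot_carrier: "carrier (pquot_module R c) = pquot_class R c ` carrier R"
  by (simp add: pquot_module_def)

lemma pquot_zero: "\<zero>\<^bsub>pquot_module R c\<^esub> = pquot_class R c \<zero>"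
  by (simp add: pquot_module_def)

lemma pquot_add:
  assumes "c \<in> carrier R" "a \<in> carrier R" "b \<in> carrier R"
  shows "pquot_class R c a \<oplus>\<^bsub>pquot_module R c\<^esub> pquot_class R c b = pquot_class R c (a \<oplus> b)"
proof -
  obtain t s where "t \<in> carrier R" "pquot_rep R c (pquot_class R c a) = a \<oplus> c \<otimes> t"
    and "s \<in> carrier R" "pquot_rep R c (pquot_class R c b) = b \<oplus> c \<otimes> s"
    using pquot_rep_class assms by metis
  moreover from this have "a \<oplus> c \<otimes> t \<oplus> (b \<oplus> c \<otimes> s) = a \<oplus> b \<oplus> c \<otimes> (t \<oplus> s)"
    using assms by algebra
  ultimately show ?thesis
    unfolding pquot_module_def using assms by (auto simp: pquot_class_eq_iff)
qed

lemma pquot_smult: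
  assumes "c \<in> carrier R" "a \<in> carrier R" "r \<in> carrier R"
  shows "r \<odot>\<^bsub>pquot_module R c\<^esub> pquot_class R c a = pquot_class R c (r \<otimes> a)"
proof -
  obtain t where "t \<in> carrier R" "pquot_rep R c (pquot_class R c a) = a \<oplus> c \<otimes> t"
    using pquot_rep_class assms by metis
  moreover from this have "r \<otimes> (a \<oplus> c \<otimes> t) = r \<otimes> a \<oplus> c \<otimes> (r \<otimes> t)"
    using assms by algebra
  ultimately show ?thesis
    unfolding pquot_module_def using assms by (auto simp: pquot_class_eq_iff)
qed

lemma pquot_add_eq:
  "X \<oplus>\<^bsub>pquot_module R c\<^esub> Y = pquot_class R c (pquot_rep R c X \<oplus> pquot_rep R c Y)"
  by (simp add: pquot_module_def)

lemma pquot_smult_eq: "r \<odot>\<^bsub>pquot_module R c\<^esub> X = pquot_class R c (r \<otimes> pquot_rep R c X)"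
  by (simp add: pquot_module_def)

lemma pquot_annihilated:
  assumes "c \<in> carrier R" "X \<in> carrier (pquot_module R c)"
  shows "c \<odot>\<^bsub>pquot_module R c\<^esub> X = \<zero>\<^bsub>pquot_module R c\<^esub>"
proof -
  obtain a where "a \<in> carrier R" "X = pquot_class R c a"
    using assms(2) by (auto simp: pquot_carrier)
  then show ?thesis
    using assms(1) by (auto simp: pquot_smult pquot_zero pquot_class_eq_iff intro!: bexI[of _ a])
qed

lemma pquot_abelian_group:
  assumes c: "c \<in> carrier R"
  shows "abelian_group (pquot_module R c)"
proof (rule abelian_groupI)
  show "\<zero>\<^bsub>pquot_module R c\<^esub> \<in> carrier (pquot_module R c)"
    by (simp add: pquot_carrier pquot_zero)
  fix X Y Z assume "X \<in> carrier (pquot_module R c)" "Y \<in> carrier (pquot_module R c)"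
    "Z \<in> carrier (pquot_module R c)"
  then obtain a b d where abd: "a \<in> carrier R" "b \<in> carrier R" "d \<in> carrier R"
    and XYZ: "X = pquot_class R c a" "Y = pquot_class R c b" "Z = pquot_class R c d"
    by (auto simp: pquot_carrier)
  show "X \<oplus>\<^bsub>pquot_module R c\<^esub> Y \<in> carrier (pquot_module R c)"
    using abd c by (simp add: XYZ pquot_add pquot_carrier)
  show "X \<oplus>\<^bsub>pquot_module R c\<^esub> Y \<oplus>\<^bsub>pquot_module R c\<^esub> Z
      = X \<oplus>\<^bsub>pquot_module R c\<^esub> (Y \<oplus>\<^bsub>pquot_module R c\<^esub> Z)"
    using abd c by (simp add: XYZ pquot_add a_assoc)
  show "X \<oplus>\<^bsub>pquot_module R c\<^esub> Y = Y \<oplus>\<^bsub>pquot_module R c\<^esub> X"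
    using abd c by (simp add: XYZ pquot_add a_comm)
  show "\<zero>\<^bsub>pquot_module R c\<^esub> \<oplus>\<^bsub>pquot_module R c\<^esub> X = X"
    using abd c by (simp add: XYZ pquot_add pquot_zero)
  show "\<exists>W\<in>carrier (pquot_module R c). W \<oplus>\<^bsub>pquot_module R c\<^esub> X = \<zero>\<^bsub>pquot_module R c\<^esub>"
  proof
    show "pquot_class R c (\<ominus> a) \<oplus>\<^bsub>pquot_module R c\<^esub> X = \<zero>\<^bsub>pquot_module R c\<^esub>"
      using abd c by (simp add: XYZ pquot_add pquot_zero l_neg)
  qed (use abd in \<open>simp add: pquot_carrier\<close>)
qed

lemma pquot_module_is_module:
  assumes c: "c \<in> carrier R"
  shows "module R (pquot_module R c)"
proof (rule moduleI[OF is_cring pquot_abelian_group[OF c]])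
  fix r X assume "r \<in> carrier R" "X \<in> carrier (pquot_module R c)"
  then show "r \<odot>\<^bsub>pquot_module R c\<^esub> X \<in> carrier (pquot_module R c)"
    using c by (auto simp: pquot_smult pquot_carrier)
next
  fix r s X assume rs: "r \<in> carrier R" "s \<in> carrier R" and "X \<in> carrier (pquot_module R c)"
  then obtain a where a: "a \<in> carrier R" and X: "X = pquot_class R c a"
    by (auto simp: pquot_carrier)
  show "(r \<oplus> s) \<odot>\<^bsub>pquot_module R c\<^esub> X
      = r \<odot>\<^bsub>pquot_module R c\<^esub> X \<oplus>\<^bsub>pquot_module R c\<^esub> s \<odot>\<^bsub>pquot_module R c\<^esub> X"
    using rs a c by (simp add: X pquot_smult pquot_add l_distr)
  show "(r \<otimes> s) \<odot>\<^bsub>pquot_module R c\<^esub> X = r \<odot>\<^bsub>pquot_module R c\<^esub> (s \<odot>\<^bsub>pquot_module R c\<^esub> X)"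
    using rs a c by (simp add: X pquot_smult m_assoc)
next
  fix X assume "X \<in> carrier (pquot_module R c)"
  then show "\<one> \<odot>\<^bsub>pquot_module R c\<^esub> X = X"
    using c by (auto simp: pquot_smult pquot_carrier)
next
  fix r X Y assume r: "r \<in> carrier R"
    and "X \<in> carrier (pquot_module R c)" "Y \<in> carrier (pquot_module R c)"
  then obtain a b where ab: "a \<in> carrier R" "b \<in> carrier R"
    and XY: "X = pquot_class R c a" "Y = pquot_class R c b"
    by (auto simp: pquot_carrier)
  show "r \<odot>\<^bsub>pquot_module R c\<^esub> (X \<oplus>\<^bsub>pquot_module R c\<^esub> Y)
      = r \<odot>\<^bsub>pquot_module R c\<^esub> X \<oplus>\<^bsub>pquot_module R c\<^esub> r \<odot>\<^bsub>pquot_module R c\<^esub> Y"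
    using r ab c by (simp add: XY pquot_smult pquot_add r_distr)
qed

end

section \<open>Evaluating formal sums\<close>

definition fsum_eval ::
    "('a, 'c) ring_scheme \<Rightarrow> ('a, 'm, 'd) module_scheme \<Rightarrow> ('p \<Rightarrow> 'm) \<Rightarrow> ('p \<Rightarrow> 'a) \<Rightarrow> 'm" where
  "fsum_eval R M \<beta> h = finsum M (\<lambda>p. h p \<odot>\<^bsub>M\<^esub> \<beta> p) {p. h p \<noteq> \<zero>\<^bsub>R\<^esub>}"

lemma fsum_in_carrier: "fsum_in R A B h \<Longrightarrow> h p \<in> carrier R"
  unfolding fsum_in_def by blast

context module
begin

lemma fsum_eval_eq_finsum:
  assumes h: "fsum_in R A B h" and \<beta>: "\<beta> \<in> A \<times> B \<rightarrow> carrier M"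
    and S: "finite S" "{p. h p \<noteq> \<zero>} \<subseteq> S" "S \<subseteq> A \<times> B"
  shows "fsum_eval R M \<beta> h = finsum M (\<lambda>p. h p \<odot>\<^bsub>M\<^esub> \<beta> p) S"
  unfolding fsum_eval_def
proof (rule M.add.finprod_mono_neutral_cong_left)
  show "(\<lambda>p. h p \<odot>\<^bsub>M\<^esub> \<beta> p) \<in> S \<rightarrow> carrier M"
    using fsum_in_carrier[OF h] \<beta> S(3) by (blast intro: smult_closed)
  show "h p \<odot>\<^bsub>M\<^esub> \<beta> p = \<zero>\<^bsub>M\<^esub>" if "p \<in> S - {p. h p \<noteq> \<zero>}" for p
    using that \<beta> S(3) by (simp add: funcset_mem subsetD)
qed (use S in auto)

lemma fsum_eval_closed:
  "fsum_in R A B h \<Longrightarrow> \<beta> \<in> A \<times> B \<rightarrow> carrier M \<Longrightarrow> fsum_eval R M \<beta> h \<in> carrier M"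
  unfolding fsum_eval_def fsum_in_def by (intro M.finsum_closed) (blast intro: smult_closed)

lemma fsum_in_add_smult:
  assumes "fsum_in R A B f" "fsum_in R A B g" "r \<in> carrier R"
  shows "fsum_in R A B (\<lambda>q. f q \<oplus> r \<otimes> g q)"
proof -
  have "{p. f p \<oplus> r \<otimes> g p \<noteq> \<zero>} \<subseteq> {p. f p \<noteq> \<zero>} \<union> {p. g p \<noteq> \<zero>}"
    using assms by (auto simp: fsum_in_def)
  then show ?thesis
    using assms unfolding fsum_in_def by (auto intro: finite_subset)
qed

lemma fsum_eval_add_smult:
  assumes f: "fsum_in R A B f" and g: "fsum_in R A B g" and r: "r \<in> carrier R"
    and \<beta>: "\<beta> \<in> A \<times> B \<rightarrow> carrier M"
  shows "fsum_eval R M \<beta> (\<lambda>q. f q \<oplus> r \<otimes> g q)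
    = fsum_eval R M \<beta> f \<oplus>\<^bsub>M\<^esub> r \<odot>\<^bsub>M\<^esub> fsum_eval R M \<beta> g"
proof -
  define S where "S = {p. f p \<noteq> \<zero>} \<union> {p. g p \<noteq> \<zero>}"
  have S: "finite S" "S \<subseteq> A \<times> B" "{p. f p \<noteq> \<zero>} \<subseteq> S" "{p. g p \<noteq> \<zero>} \<subseteq> S"
    "{p. f p \<oplus> r \<otimes> g p \<noteq> \<zero>} \<subseteq> S"
    using f g r by (auto simp: S_def fsum_in_def)
  have "f \<in> S \<rightarrow> carrier R" "g \<in> S \<rightarrow> carrier R" "\<beta> \<in> S \<rightarrow> carrier M"
    using fsum_in_carrier[OF f] fsum_in_carrier[OF g] \<beta> S(2) by auto
  then show ?thesis
    using fsum_eval_eq_finsum[OF fsum_in_add_smult[OF f g r] \<beta> S(1) S(5) S(2)]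
      fsum_eval_eq_finsum[OF f \<beta> S(1) S(3) S(2)] fsum_eval_eq_finsum[OF g \<beta> S(1) S(4) S(2)]
      finsum_smult_add_smult[OF S(1) _ _ _ r] by simp
qed

lemma fsum_in_diff_smult:
  assumes "fsum_in R A B f" "fsum_in R A B g" "r \<in> carrier R"
  shows "fsum_in R A B (\<lambda>q. f q \<ominus> r \<otimes> g q)"
  using fsum_in_add_smult[of A B f g "\<ominus> r"] fsum_in_carrier[of R A B g] assms
  by (simp add: R.minus_eq R.l_minus)

lemma fsum_eval_diff_smult:
  assumes "fsum_in R A B f" "fsum_in R A B g" "r \<in> carrier R" "\<beta> \<in> A \<times> B \<rightarrow> carrier M"
  shows "fsum_eval R M \<beta> (\<lambda>q. f q \<ominus> r \<otimes> g q)
    = fsum_eval R M \<beta> f \<ominus>\<^bsub>M\<^esub> r \<odot>\<^bsub>M\<^esub> fsum_eval R M \<beta> g"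
  using fsum_eval_add_smult[of A B f g "\<ominus> r"] fsum_in_carrier[of R A B g]
    fsum_eval_closed[OF assms(2,4)] assms
  by (simp add: R.minus_eq R.l_minus M.minus_eq smult_l_minus)

lemma fsum_in_fdelta: "p \<in> A \<times> B \<Longrightarrow> fsum_in R A B (fdelta R p)"
  unfolding fsum_in_def fdelta_def by (auto intro: finite_subset[of _ "{p}"])

lemma fsum_eval_fdelta:
  assumes "p \<in> A \<times> B" "\<beta> \<in> A \<times> B \<rightarrow> carrier M"
  shows "fsum_eval R M \<beta> (fdelta R p) = \<beta> p"
proof -
  have "fsum_eval R M \<beta> (fdelta R p) = finsum M (\<lambda>q. fdelta R p q \<odot>\<^bsub>M\<^esub> \<beta> q) {p}"
    using assms by (intro fsum_eval_eq_finsum[OF fsum_in_fdelta]) (auto simp: fdelta_def)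
  moreover have "\<beta> p \<in> carrier M"
    using assms by blast
  ultimately show ?thesis
    using M.finsum_insert[of "{}" p] by (simp add: fdelta_def)
qed

lemma fsum_eval_scalar_relation:
  assumes "p1 \<in> A \<times> B" "p2 \<in> A \<times> B" "r \<in> carrier R" "\<beta> \<in> A \<times> B \<rightarrow> carrier M"
  shows "fsum_in R A B (\<lambda>q. fdelta R p1 q \<ominus> r \<otimes> fdelta R p2 q)"
    and "fsum_eval R M \<beta> (\<lambda>q. fdelta R p1 q \<ominus> r \<otimes> fdelta R p2 q) = \<beta> p1 \<ominus>\<^bsub>M\<^esub> r \<odot>\<^bsub>M\<^esub> \<beta> p2"
  using assms
  by (simp_all add: fsum_in_diff_smult fsum_eval_diff_smult[where A = A and B = B] fsum_in_fdelta
      fsum_eval_fdelta[where A = A and B = B])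

lemma fsum_eval_additivity_relation:
  assumes "p1 \<in> A \<times> B" "p2 \<in> A \<times> B" "p3 \<in> A \<times> B" "\<beta> \<in> A \<times> B \<rightarrow> carrier M"
  shows "fsum_in R A B (\<lambda>q. fdelta R p1 q \<ominus> fdelta R p2 q \<ominus> fdelta R p3 q)"
    and "fsum_eval R M \<beta> (\<lambda>q. fdelta R p1 q \<ominus> fdelta R p2 q \<ominus> fdelta R p3 q)
      = \<beta> p1 \<ominus>\<^bsub>M\<^esub> \<beta> p2 \<ominus>\<^bsub>M\<^esub> \<beta> p3"
proof -
  have eq: "(\<lambda>q. fdelta R p1 q \<ominus> fdelta R p2 q \<ominus> fdelta R p3 q)
    = (\<lambda>q. (fdelta R p1 q \<ominus> \<one> \<otimes> fdelta R p2 q) \<ominus> \<one> \<otimes> fdelta R p3 q)"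
    by (simp add: fdelta_def)
  have "\<beta> p2 \<in> carrier M" "\<beta> p3 \<in> carrier M"
    using assms by blast+
  with assms show "fsum_in R A B (\<lambda>q. fdelta R p1 q \<ominus> fdelta R p2 q \<ominus> fdelta R p3 q)"
    and "fsum_eval R M \<beta> (\<lambda>q. fdelta R p1 q \<ominus> fdelta R p2 q \<ominus> fdelta R p3 q)
      = \<beta> p1 \<ominus>\<^bsub>M\<^esub> \<beta> p2 \<ominus>\<^bsub>M\<^esub> \<beta> p3"
    unfolding eq
    by (simp_all add: fsum_in_diff_smult fsum_eval_diff_smult[where A = A and B = B]
        fsum_eval_scalar_relation fsum_in_fdelta fsum_eval_fdelta[where A = A and B = B])
qed

end

section \<open>Pure submodules are relatively divisible\<close>

text \<open>
  The pairing (m, a + cR) \<mapsto> am depends on the representative a only modulo cN, so it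
  sends the defining relations of N \<otimes> R/cR into cN rather than to 0.
\<close>
definition pquot_pairing ::
    "('a, 'c) ring_scheme \<Rightarrow> ('a, 'm, 'd) module_scheme \<Rightarrow> 'a \<Rightarrow> 'm \<times> (nat \<Rightarrow> 'a) set \<Rightarrow> 'm" where
  "pquot_pairing R M c = (\<lambda>(m, X). pquot_rep R c X \<odot>\<^bsub>M\<^esub> m)"

context module
begin

lemma pquot_pairing_closed:
  "N \<subseteq> carrier M \<Longrightarrow> pquot_pairing R M c \<in> N \<times> carrier (pquot_module R c) \<rightarrow> carrier M"
  by (auto simp: pquot_pairing_def pquot_rep_closed)

lemma pquot_pairing_left_relations:
  assumes "m \<in> carrier M" "e \<in> carrier (pquot_module R c)"
  shows "m' \<in> carrier M \<Longrightarrow> pquot_pairing R M c (m \<oplus>\<^bsub>M\<^esub> m', e) \<ominus>\<^bsub>M\<^esub> pquot_pairing R M c (m, e)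
      \<ominus>\<^bsub>M\<^esub> pquot_pairing R M c (m', e) = \<zero>\<^bsub>M\<^esub>"
    and "r \<in> carrier R \<Longrightarrow>
      pquot_pairing R M c (r \<odot>\<^bsub>M\<^esub> m, e) \<ominus>\<^bsub>M\<^esub> r \<odot>\<^bsub>M\<^esub> pquot_pairing R M c (m, e) = \<zero>\<^bsub>M\<^esub>"
  using assms pquot_rep_closed[OF assms(2)] unfolding pquot_pairing_def
  by (simp_all add: M.minus_eq M.add.inv_solve_right')
    (simp_all add: smult_r_distr smult_assoc1[symmetric] m_comm M.a_ac)

lemma pquot_pairing_right_relations:
  assumes c: "c \<in> carrier R" and m: "m \<in> carrier M" and e: "e \<in> carrier (pquot_module R c)"
  shows "e' \<in> carrier (pquot_module R c) \<Longrightarrow>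
      \<exists>t\<in>carrier R. pquot_pairing R M c (m, e \<oplus>\<^bsub>pquot_module R c\<^esub> e')
      \<ominus>\<^bsub>M\<^esub> pquot_pairing R M c (m, e) \<ominus>\<^bsub>M\<^esub> pquot_pairing R M c (m, e') = c \<odot>\<^bsub>M\<^esub> (t \<odot>\<^bsub>M\<^esub> m)"
    and "r \<in> carrier R \<Longrightarrow> \<exists>t\<in>carrier R. pquot_pairing R M c (m, r \<odot>\<^bsub>pquot_module R c\<^esub> e)
      \<ominus>\<^bsub>M\<^esub> r \<odot>\<^bsub>M\<^esub> pquot_pairing R M c (m, e) = c \<odot>\<^bsub>M\<^esub> (t \<odot>\<^bsub>M\<^esub> m)"
proof -
  assume "e' \<in> carrier (pquot_module R c)"
  then have a: "pquot_rep R c e \<in> carrier R" "pquot_rep R c e' \<in> carrier R"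
    using pquot_rep_closed e by auto
  obtain t where t: "t \<in> carrier R"
    "pquot_rep R c (e \<oplus>\<^bsub>pquot_module R c\<^esub> e') = pquot_rep R c e \<oplus> pquot_rep R c e' \<oplus> c \<otimes> t"
    using pquot_rep_class[OF c] a unfolding pquot_add_eq by (metis R.a_closed)
  then show "\<exists>t\<in>carrier R. pquot_pairing R M c (m, e \<oplus>\<^bsub>pquot_module R c\<^esub> e')
      \<ominus>\<^bsub>M\<^esub> pquot_pairing R M c (m, e) \<ominus>\<^bsub>M\<^esub> pquot_pairing R M c (m, e') = c \<odot>\<^bsub>M\<^esub> (t \<odot>\<^bsub>M\<^esub> m)"
    unfolding pquot_pairing_def using m a c
    by (intro bexI[OF _ t(1)]) (simp add: M.minus_eq M.add.inv_solve_right',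
        simp add: smult_l_distr smult_assoc1 M.a_ac)
next
  assume r: "r \<in> carrier R"
  have a: "pquot_rep R c e \<in> carrier R"
    using pquot_rep_closed e .
  obtain s where s: "s \<in> carrier R"
    "pquot_rep R c (r \<odot>\<^bsub>pquot_module R c\<^esub> e) = r \<otimes> pquot_rep R c e \<oplus> c \<otimes> s"
    using pquot_rep_class[OF c] a r unfolding pquot_smult_eq by (metis R.m_closed)
  then show "\<exists>t\<in>carrier R. pquot_pairing R M c (m, r \<odot>\<^bsub>pquot_module R c\<^esub> e)
      \<ominus>\<^bsub>M\<^esub> r \<odot>\<^bsub>M\<^esub> pquot_pairing R M c (m, e) = c \<odot>\<^bsub>M\<^esub> (t \<odot>\<^bsub>M\<^esub> m)"
    unfolding pquot_pairing_def using m a c r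
    by (intro bexI[OF _ s(1)]) (simp add: M.minus_eq M.add.inv_solve_right',
        simp add: smult_l_distr smult_assoc1 M.a_ac)
qed

lemma tensor_gens_pairing:
  assumes N: "submodule N R M" and c: "c \<in> carrier R"
    and g: "g \<in> tensor_gens R (M\<lparr>carrier := N\<rparr>) (pquot_module R c)"
  shows "fsum_in R N (carrier (pquot_module R c)) g
    \<and> fsum_eval R M (pquot_pairing R M c) g \<in> (\<lambda>y. c \<odot>\<^bsub>M\<^esub> y) ` N"
proof -
  let ?E = "pquot_module R c"
  interpret E: module R ?E
    using pquot_module_is_module[OF c] .
  have NM: "N \<subseteq> carrier M"
    using submoduleE(1)[OF N] .
  note additivity = fsum_eval_additivity_relation[OF _ _ _ pquot_pairing_closed[OF NM]]
  note scalar = fsum_eval_scalar_relation[OF _ _ _ pquot_pairing_closed[OF NM]]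
  have zero: "\<zero>\<^bsub>M\<^esub> \<in> (\<lambda>y. c \<odot>\<^bsub>M\<^esub> y) ` N"
    using submodule_zero_closed[OF N] c by force
  from g consider
      (add_left) m m' e where "m \<in> N" "m' \<in> N" "e \<in> carrier ?E"
        "g = (\<lambda>q. fdelta R (m \<oplus>\<^bsub>M\<^esub> m', e) q \<ominus> fdelta R (m, e) q \<ominus> fdelta R (m', e) q)"
    | (add_right) m e e' where "m \<in> N" "e \<in> carrier ?E" "e' \<in> carrier ?E"
        "g = (\<lambda>q. fdelta R (m, e \<oplus>\<^bsub>?E\<^esub> e') q \<ominus> fdelta R (m, e) q \<ominus> fdelta R (m, e') q)"
    | (smult_left) r m e where "r \<in> carrier R" "m \<in> N" "e \<in> carrier ?E"
        "g = (\<lambda>q. fdelta R (r \<odot>\<^bsub>M\<^esub> m, e) q \<ominus> r \<otimes> fdelta R (m, e) q)"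
    | (smult_right) r m e where "r \<in> carrier R" "m \<in> N" "e \<in> carrier ?E"
        "g = (\<lambda>q. fdelta R (m, r \<odot>\<^bsub>?E\<^esub> e) q \<ominus> r \<otimes> fdelta R (m, e) q)"
    unfolding tensor_gens_def by auto
  then show ?thesis
  proof cases
    case add_left
    then show ?thesis
      using zero NM submoduleE(5)[OF N]
      by (simp add: additivity pquot_pairing_left_relations subsetD)
  next
    case add_right
    then obtain t where "t \<in> carrier R" "fsum_eval R M (pquot_pairing R M c) g = c \<odot>\<^bsub>M\<^esub> (t \<odot>\<^bsub>M\<^esub> m)"
      using NM E.a_closed pquot_pairing_right_relations(1)[OF c _ add_right(2,3)]
      by (auto simp: additivity)
    then show ?thesis
      using add_right E.a_closed submoduleE(4)[OF N] by (auto simp: additivity)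
  next
    case smult_left
    then show ?thesis
      using zero NM submoduleE(4)[OF N]
      by (simp add: scalar pquot_pairing_left_relations subsetD)
  next
    case smult_right
    then obtain t where "t \<in> carrier R" "fsum_eval R M (pquot_pairing R M c) g = c \<odot>\<^bsub>M\<^esub> (t \<odot>\<^bsub>M\<^esub> m)"
      using NM E.smult_closed pquot_pairing_right_relations(2)[OF c _ smult_right(3,1)]
      by (auto simp: scalar)
    then show ?thesis
      using smult_right E.smult_closed submoduleE(4)[OF N] by (auto simp: scalar)
  qed
qed

lemma tensor_rel_pairing:
  assumes N: "submodule N R M" and c: "c \<in> carrier R"
    and h: "h \<in> tensor_rel R (M\<lparr>carrier := N\<rparr>) (pquot_module R c)"
  shows "fsum_in R N (carrier (pquot_module R c)) h
    \<and> fsum_eval R M (pquot_pairing R M c) h \<in> (\<lambda>y. c \<odot>\<^bsub>M\<^esub> y) ` N"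
  using h
proof (induction rule: tensor_rel.induct)
  case zero
  have "fsum_eval R M (pquot_pairing R M c) (\<lambda>q. \<zero>) = c \<odot>\<^bsub>M\<^esub> \<zero>\<^bsub>M\<^esub>"
    using c by (simp add: fsum_eval_def)
  then show ?case
    using submodule_zero_closed[OF N] by (auto simp: fsum_in_def)
next
  case (step f g r)
  note \<beta> = pquot_pairing_closed[OF submoduleE(1)[OF N]]
  obtain y1 where f: "fsum_in R N (carrier (pquot_module R c)) f" "y1 \<in> N"
    "fsum_eval R M (pquot_pairing R M c) f = c \<odot>\<^bsub>M\<^esub> y1"
    using step.IH by blast
  obtain y2 where g: "fsum_in R N (carrier (pquot_module R c)) g" "y2 \<in> N"
    "fsum_eval R M (pquot_pairing R M c) g = c \<odot>\<^bsub>M\<^esub> y2"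
    using tensor_gens_pairing[OF N c step.hyps(2)] by blast
  have y: "y1 \<in> carrier M" "y2 \<in> carrier M" "y1 \<oplus>\<^bsub>M\<^esub> r \<odot>\<^bsub>M\<^esub> y2 \<in> N"
    using f(2) g(2) step.hyps(3) submoduleE(1,4,5)[OF N] by auto
  have "fsum_eval R M (pquot_pairing R M c) (\<lambda>q. f q \<oplus> r \<otimes> g q)
      = c \<odot>\<^bsub>M\<^esub> y1 \<oplus>\<^bsub>M\<^esub> r \<odot>\<^bsub>M\<^esub> (c \<odot>\<^bsub>M\<^esub> y2)"
    using fsum_eval_add_smult[OF f(1) g(1) step.hyps(3) \<beta>] f(3) g(3) by simp
  also have "\<dots> = c \<odot>\<^bsub>M\<^esub> (y1 \<oplus>\<^bsub>M\<^esub> r \<odot>\<^bsub>M\<^esub> y2)"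
    using y c step.hyps(3) by (simp add: smult_r_distr smult_assoc1[symmetric] m_comm)
  finally show ?case
    using fsum_in_add_smult[OF f(1) g(1) step.hyps(3)] y(3) by blast
qed

lemma fdelta_annihilated_in_tensor_rel:
  assumes E: "module R E" and c: "c \<in> carrier R" and x: "x \<in> carrier M"
    and e: "e \<in> carrier E" and ce: "c \<odot>\<^bsub>E\<^esub> e = \<zero>\<^bsub>E\<^esub>"
  shows "fdelta R (c \<odot>\<^bsub>M\<^esub> x, e) \<in> tensor_rel R M E"
proof -
  interpret E: module R E
    using E .
  \<comment> \<open>cx \<otimes> e = x \<otimes> ce = x \<otimes> 0, and x \<otimes> 0 is a relation because 0 = 0 + 0\<close>
  define g1 where "g1 = (\<lambda>q. fdelta R (c \<odot>\<^bsub>M\<^esub> x, e) q \<ominus> c \<otimes> fdelta R (x, e) q)"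
  define g2 where "g2 = (\<lambda>q. fdelta R (x, c \<odot>\<^bsub>E\<^esub> e) q \<ominus> c \<otimes> fdelta R (x, e) q)"
  define g3 where "g3 = (\<lambda>q. fdelta R (x, \<zero>\<^bsub>E\<^esub> \<oplus>\<^bsub>E\<^esub> \<zero>\<^bsub>E\<^esub>) q
    \<ominus> fdelta R (x, \<zero>\<^bsub>E\<^esub>) q \<ominus> fdelta R (x, \<zero>\<^bsub>E\<^esub>) q)"
  have gens: "g1 \<in> tensor_gens R M E" "g2 \<in> tensor_gens R M E" "g3 \<in> tensor_gens R M E"
    unfolding tensor_gens_def g1_def g2_def g3_def using c x e by blast+
  have "(\<lambda>q. \<zero> \<oplus> \<one> \<otimes> g1 q \<oplus> (\<ominus> \<one>) \<otimes> g2 q \<oplus> (\<ominus> \<one>) \<otimes> g3 q) \<in> tensor_rel R M E"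
    using gens by (intro tensor_rel.step tensor_rel.zero) simp_all
  moreover have "fdelta R (c \<odot>\<^bsub>M\<^esub> x, e)
      = (\<lambda>q. \<zero> \<oplus> \<one> \<otimes> g1 q \<oplus> (\<ominus> \<one>) \<otimes> g2 q \<oplus> (\<ominus> \<one>) \<otimes> g3 q)"
    unfolding g1_def g2_def g3_def ce E.l_zero[OF E.zero_closed] using c
    by (intro ext) (simp add: fdelta_def, algebra)
  ultimately show ?thesis
    by simp
qed

end

definition rd_pure_submodule :: "('a, 'c) ring_scheme \<Rightarrow> ('a, 'm, 'd) module_scheme \<Rightarrow> 'm set \<Rightarrow> bool" where
  "rd_pure_submodule R M N \<longleftrightarrow> submodule N R M \<and>
     (\<forall>c\<in>carrier R. \<forall>x\<in>carrier M. c \<odot>\<^bsub>M\<^esub> x \<in> N \<longrightarrow> c \<odot>\<^bsub>M\<^esub> x \<in> (\<lambda>y. c \<odot>\<^bsub>M\<^esub> y) ` N)"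

lemma (in module) pure_submodule_imp_rd_pure:
  assumes pure: "pure_submodule R M N"
  shows "rd_pure_submodule R M N"
  unfolding rd_pure_submodule_def
proof (intro conjI ballI impI)
  show N: "submodule N R M"
    using pure by (simp add: pure_submodule_def)
  fix c x assume c: "c \<in> carrier R" and x: "x \<in> carrier M" and cx: "c \<odot>\<^bsub>M\<^esub> x \<in> N"
  let ?E = "pquot_module R c"
  define e where "e = pquot_class R c \<one>"
  have e: "e \<in> carrier ?E"
    by (simp add: e_def pquot_carrier)
  have "fdelta R (c \<odot>\<^bsub>M\<^esub> x, e) \<in> tensor_rel R M ?E"
    using pquot_module_is_module[OF c] c x e pquot_annihilated[OF c e]
    by (rule fdelta_annihilated_in_tensor_rel)
  then have "fdelta R (c \<odot>\<^bsub>M\<^esub> x, e) \<in> tensor_rel R (M\<lparr>carrier := N\<rparr>) ?E"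
    using pure pquot_module_is_module[OF c] fsum_in_fdelta[of "(c \<odot>\<^bsub>M\<^esub> x, e)" N "carrier ?E"] cx e
    unfolding pure_submodule_def tensor_injective_def by blast
  moreover have "fsum_eval R M (pquot_pairing R M c) (fdelta R (c \<odot>\<^bsub>M\<^esub> x, e))
      = pquot_rep R c e \<odot>\<^bsub>M\<^esub> (c \<odot>\<^bsub>M\<^esub> x)"
    using fsum_eval_fdelta[OF _ pquot_pairing_closed[OF submoduleE(1)[OF N]]] cx e
    by (simp add: pquot_pairing_def)
  ultimately obtain y where "y \<in> N" "pquot_rep R c e \<odot>\<^bsub>M\<^esub> (c \<odot>\<^bsub>M\<^esub> x) = c \<odot>\<^bsub>M\<^esub> y"
    using tensor_rel_pairing[OF N c] by fastforce
  moreover obtain t where "t \<in> carrier R" "pquot_rep R c e = \<one> \<oplus> c \<otimes> t"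
    using pquot_rep_class[OF c R.one_closed] unfolding e_def by metis
  ultimately show "c \<odot>\<^bsub>M\<^esub> x \<in> (\<lambda>y. c \<odot>\<^bsub>M\<^esub> y) ` N"
    using smult_image_cancel_one_plus[OF N c _ cx] by metis
qed

section \<open>Filtrations with cyclic factors\<close>

locale cyclic_filtration = module R M
  for R :: "('a, 'b) ring_scheme" (structure) and M :: "('a, 'm, 'd) module_scheme" +
  fixes Ms :: "nat \<Rightarrow> 'm set" and x :: "nat \<Rightarrow> 'm" and n :: nat
  assumes Ms_0: "Ms 0 = {\<zero>\<^bsub>M\<^esub>}"
    and Ms_submodule: "i \<le> n \<Longrightarrow> submodule (Ms i) R M"
    and Ms_step: "i \<in> {1..n} \<Longrightarrow> Ms (i - 1) \<subseteq> Ms i"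
    and generator_mem: "i \<in> {1..n} \<Longrightarrow> x i \<in> Ms i"
    and generator_spans: "i \<in> {1..n} \<Longrightarrow> m \<in> Ms i \<Longrightarrow> \<exists>r\<in>carrier R. m \<ominus>\<^bsub>M\<^esub> r \<odot>\<^bsub>M\<^esub> x i \<in> Ms (i - 1)"
begin

abbreviation ann_factor :: "nat \<Rightarrow> 'a set" where
  "ann_factor i \<equiv> ann_quot R M (Ms (i - 1)) (Ms i)"

lemma Ms_carrier: "i \<le> n \<Longrightarrow> Ms i \<subseteq> carrier M"
  using submoduleE(1)[OF Ms_submodule] .

lemma generator_carrier: "i \<in> {1..n} \<Longrightarrow> x i \<in> carrier M"
  using generator_mem Ms_carrier by auto

lemma lincomb_carrier:
  "k \<le> n \<Longrightarrow> a \<in> {1..k} \<rightarrow> carrier R \<Longrightarrow> (\<lambda>i. a i \<odot>\<^bsub>M\<^esub> x i) \<in> {1..k} \<rightarrow> carrier M"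
  using generator_carrier by auto

lemma lincomb_Suc:
  assumes "Suc k \<le> n" "a \<in> {1..Suc k} \<rightarrow> carrier R"
  shows "finsum M (\<lambda>i. a i \<odot>\<^bsub>M\<^esub> x i) {1..Suc k}
    = a (Suc k) \<odot>\<^bsub>M\<^esub> x (Suc k) \<oplus>\<^bsub>M\<^esub> finsum M (\<lambda>i. a i \<odot>\<^bsub>M\<^esub> x i) {1..k}"
  using assms lincomb_carrier by (intro M.finsum_atLeast1_Suc) blast

lemma lincomb_in_Ms:
  "k \<le> n \<Longrightarrow> a \<in> {1..k} \<rightarrow> carrier R \<Longrightarrow> finsum M (\<lambda>i. a i \<odot>\<^bsub>M\<^esub> x i) {1..k} \<in> Ms k"
proof (induction k)
  case 0
  then show ?case
    using Ms_0 by simp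
next
  case (Suc k)
  have "a \<in> {1..k} \<rightarrow> carrier R"
    using Suc.prems(2) by auto
  then have "finsum M (\<lambda>i. a i \<odot>\<^bsub>M\<^esub> x i) {1..k} \<in> Ms (Suc k)"
    using Suc Ms_step[of "Suc k"] by auto
  moreover have "a (Suc k) \<odot>\<^bsub>M\<^esub> x (Suc k) \<in> Ms (Suc k)"
    using Suc.prems generator_mem[of "Suc k"] by (intro submoduleE(4)[OF Ms_submodule]) auto
  ultimately show ?case
    using Suc.prems lincomb_Suc submoduleE(5)[OF Ms_submodule] by simp
qed

lemma mem_Ms_imp_lincomb:
  "k \<le> n \<Longrightarrow> m \<in> Ms k \<Longrightarrow> \<exists>d\<in>{1..k} \<rightarrow> carrier R. m = finsum M (\<lambda>i. d i \<odot>\<^bsub>M\<^esub> x i) {1..k}"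
proof (induction k arbitrary: m)
  case 0
  then show ?case
    using Ms_0 by auto
next
  case (Suc k)
  obtain r where r: "r \<in> carrier R" "m \<ominus>\<^bsub>M\<^esub> r \<odot>\<^bsub>M\<^esub> x (Suc k) \<in> Ms k"
    using generator_spans[of "Suc k" m] Suc.prems by auto
  then obtain d where d: "d \<in> {1..k} \<rightarrow> carrier R"
    "m \<ominus>\<^bsub>M\<^esub> r \<odot>\<^bsub>M\<^esub> x (Suc k) = finsum M (\<lambda>i. d i \<odot>\<^bsub>M\<^esub> x i) {1..k}"
    using Suc by auto
  define d' where "d' = d(Suc k := r)"
  have d': "d' \<in> {1..Suc k} \<rightarrow> carrier R"
    using d(1) r(1) by (auto simp: d'_def)
  have "finsum M (\<lambda>i. d' i \<odot>\<^bsub>M\<^esub> x i) {1..k} = finsum M (\<lambda>i. d i \<odot>\<^bsub>M\<^esub> x i) {1..k}"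
    using lincomb_carrier[of k d] d(1) Suc.prems by (intro M.finsum_cong') (auto simp: d'_def)
  then have "finsum M (\<lambda>i. d' i \<odot>\<^bsub>M\<^esub> x i) {1..Suc k}
      = r \<odot>\<^bsub>M\<^esub> x (Suc k) \<oplus>\<^bsub>M\<^esub> (m \<ominus>\<^bsub>M\<^esub> r \<odot>\<^bsub>M\<^esub> x (Suc k))"
    using lincomb_Suc[OF Suc.prems(1) d'] d(2) by (simp add: d'_def)
  also have "\<dots> = m"
    using Suc.prems r(1) generator_carrier[of "Suc k"] Ms_carrier[of "Suc k"]
    by (simp add: M.minus_eq M.a_lcomm[of "r \<odot>\<^bsub>M\<^esub> x (Suc k)" m] M.r_neg subsetD)
  finally show ?case
    using d' by metis
qed

lemma generator_ann_factorI:
  "k \<in> {1..n} \<Longrightarrow> r \<in> carrier R \<Longrightarrow> r \<odot>\<^bsub>M\<^esub> x k \<in> Ms (k - 1) \<Longrightarrow> r \<in> ann_factor k"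
  using Ms_submodule Ms_carrier generator_carrier generator_spans
  by (intro ann_quot_cyclicI) auto

lemma relation_last_term_mem:
  assumes k: "Suc k \<le> n" and c: "c \<in> {1..Suc k} \<rightarrow> carrier R"
    and rel: "finsum M (\<lambda>i. c i \<odot>\<^bsub>M\<^esub> x i) {1..Suc k} = \<zero>\<^bsub>M\<^esub>"
  shows "c (Suc k) \<odot>\<^bsub>M\<^esub> x (Suc k) \<in> Ms k"
proof -
  let ?s = "finsum M (\<lambda>i. c i \<odot>\<^bsub>M\<^esub> x i) {1..k}"
  have "c \<in> {1..k} \<rightarrow> carrier R" and cK: "c (Suc k) \<in> carrier R"
    using c by auto
  then have s: "?s \<in> Ms k" "?s \<in> carrier M"
    using lincomb_in_Ms[of k c] Ms_carrier[of k] k by auto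
  have "c (Suc k) \<odot>\<^bsub>M\<^esub> x (Suc k) = \<ominus>\<^bsub>M\<^esub> ?s"
    using lincomb_Suc[OF k c] rel s(2) cK generator_carrier[of "Suc k"] k
    by (simp add: M.minus_equality)
  then show ?thesis
    using submoduleE(3)[OF Ms_submodule s(1)] k by simp
qed

lemma relation_shorten:
  assumes rd_pure: "rd_pure_submodule R M (Ms k)"
    and k: "Suc k \<le> n" and c: "c \<in> {1..Suc k} \<rightarrow> carrier R"
    and rel: "finsum M (\<lambda>i. c i \<odot>\<^bsub>M\<^esub> x i) {1..Suc k} = \<zero>\<^bsub>M\<^esub>"
  shows "\<exists>d\<in>{1..k} \<rightarrow> carrier R.
    finsum M (\<lambda>i. (c i \<oplus> c (Suc k) \<otimes> d i) \<odot>\<^bsub>M\<^esub> x i) {1..k} = \<zero>\<^bsub>M\<^esub>"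
proof -
  have cK: "c (Suc k) \<in> carrier R" and xK: "x (Suc k) \<in> carrier M"
    and ck: "c \<in> {1..k} \<rightarrow> carrier R"
    using c k generator_carrier by auto
  have s: "finsum M (\<lambda>i. c i \<odot>\<^bsub>M\<^esub> x i) {1..k} \<in> carrier M"
    using lincomb_in_Ms[OF _ ck] Ms_carrier[of k] k by auto
  obtain y where y: "y \<in> Ms k" "c (Suc k) \<odot>\<^bsub>M\<^esub> y = c (Suc k) \<odot>\<^bsub>M\<^esub> x (Suc k)"
    using rd_pure relation_last_term_mem[OF k c rel] cK xK
    unfolding rd_pure_submodule_def by force
  obtain d where d: "d \<in> {1..k} \<rightarrow> carrier R" "y = finsum M (\<lambda>i. d i \<odot>\<^bsub>M\<^esub> x i) {1..k}"
    using mem_Ms_imp_lincomb[of k y] y(1) k by auto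
  have "finsum M (\<lambda>i. (c i \<oplus> c (Suc k) \<otimes> d i) \<odot>\<^bsub>M\<^esub> x i) {1..k}
      = finsum M (\<lambda>i. c i \<odot>\<^bsub>M\<^esub> x i) {1..k} \<oplus>\<^bsub>M\<^esub> c (Suc k) \<odot>\<^bsub>M\<^esub> y"
    unfolding d(2) using c d(1) cK k by (intro finsum_smult_add_smult) (auto simp: generator_carrier)
  also have "\<dots> = \<zero>\<^bsub>M\<^esub>"
    using rel lincomb_Suc[OF k c] y(2) s cK xK by (simp add: M.a_comm)
  finally show ?thesis
    using d(1) by blast
qed

lemma relation_coeffs_in_ann_factor:
  assumes rd_pure: "\<And>k. k < n \<Longrightarrow> rd_pure_submodule R M (Ms k)"
    and ann_mono: "\<And>k. k \<in> {1..<n} \<Longrightarrow> ann_factor k \<subseteq> ann_factor (k + 1)"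
  shows "k \<le> n \<Longrightarrow> c \<in> {1..k} \<rightarrow> carrier R \<Longrightarrow> finsum M (\<lambda>i. c i \<odot>\<^bsub>M\<^esub> x i) {1..k} = \<zero>\<^bsub>M\<^esub>
    \<Longrightarrow> i \<in> {1..k} \<Longrightarrow> c i \<in> ann_factor k"
proof (induction k arbitrary: c i)
  case 0
  then show ?case
    by simp
next
  case (Suc k)
  have cK: "c (Suc k) \<in> carrier R" and c: "c \<in> {1..k} \<rightarrow> carrier R"
    using Suc.prems(2) by auto
  have cK_ann: "c (Suc k) \<in> ann_factor (Suc k)"
    using relation_last_term_mem[OF Suc.prems(1-3)] Suc.prems(1) cK
    by (intro generator_ann_factorI) auto
  show ?case
  proof (cases "i = Suc k")
    case True
    then show ?thesis
      using cK_ann by simp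
  next
    case False
    then have i: "i \<in> {1..k}" and k: "k \<in> {1..<n}"
      using Suc.prems(1,4) by auto
    obtain d where d: "d \<in> {1..k} \<rightarrow> carrier R"
      and rel: "finsum M (\<lambda>j. (c j \<oplus> c (Suc k) \<otimes> d j) \<odot>\<^bsub>M\<^esub> x j) {1..k} = \<zero>\<^bsub>M\<^esub>"
      using relation_shorten[OF rd_pure Suc.prems(1-3)] k by auto
    have "(\<lambda>j. c j \<oplus> c (Suc k) \<otimes> d j) \<in> {1..k} \<rightarrow> carrier R"
      using c d cK by (auto simp: Pi_iff)
    then have IH: "c i \<oplus> c (Suc k) \<otimes> d i \<in> ann_factor (Suc k)"
      using Suc.IH[OF _ _ rel i] ann_mono[OF k] k by auto
    have ci: "c i \<in> carrier R" "d i \<in> carrier R"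
      using c d i by auto
    then have eq: "c i = (c i \<oplus> c (Suc k) \<otimes> d i) \<oplus> \<ominus> (d i \<otimes> c (Suc k))"
      using cK by algebra
    interpret A: ideal "ann_factor (Suc k)" R
      using Suc.prems(1) Ms_submodule Ms_carrier by (intro ann_quot_ideal) auto
    have "(c i \<oplus> c (Suc k) \<otimes> d i) \<oplus> \<ominus> (d i \<otimes> c (Suc k)) \<in> ann_factor (Suc k)"
      using A.a_closed[OF IH A.a_inv_closed[OF A.I_l_closed[OF cK_ann ci(2)]]] .
    with eq show ?thesis
      by simp
  qed
qed

end

theorem lemma3p2:
  fixes R :: "'a ring" and M :: "('a, 'm) module"
    and Ms :: "nat \<Rightarrow> 'm set" and x :: "nat \<Rightarrow> 'm" and c :: "nat \<Rightarrow> 'a" and n :: nat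
  assumes arith: "arithmetic_ring R"
    and modM: "module R M"
    and fg: "fin_gen_module R M"
    and M0: "Ms 0 = {\<zero>\<^bsub>M\<^esub>}"
    and Mn: "Ms n = carrier M"
    and pure: "\<forall>i\<le>n. pure_submodule R M (Ms i)"
    and chain: "\<forall>i\<in>{1..n}. Ms (i - 1) \<subseteq> Ms i"
    and cyc: "\<forall>i\<in>{1..n}. x i \<in> Ms i \<and>
                (\<forall>m\<in>Ms i. \<exists>r\<in>carrier R. m \<ominus>\<^bsub>M\<^esub> (r \<odot>\<^bsub>M\<^esub> x i) \<in> Ms (i - 1))"
    and incr: "\<forall>i\<in>{1..<n}. ann_quot R M (Ms (i - 1)) (Ms i) \<subseteq> ann_quot R M (Ms i) (Ms (i + 1))"
    and c_in: "\<forall>i\<in>{1..n}. c i \<in> carrier R"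
    and rel: "finsum M (\<lambda>i. c i \<odot>\<^bsub>M\<^esub> x i) {1..n} = \<zero>\<^bsub>M\<^esub>"
  shows "\<forall>i\<in>{1..n}. c i \<in> ann_quot R M (Ms (n - 1)) (Ms n)"
proof -
  interpret cyclic_filtration R M Ms x n
    using modM M0 pure chain cyc
    by (intro cyclic_filtration.intro cyclic_filtration_axioms.intro) (auto simp: pure_submodule_def)
  have "rd_pure_submodule R M (Ms k)" if "k < n" for k
    using pure that by (intro pure_submodule_imp_rd_pure) auto
  then show ?thesis
    using relation_coeffs_in_ann_factor incr c_in rel by auto
qed

end
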